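(* Consider the two-player continuous time stochastic game with $S=\{1,2\}$, $A^1(1)=A^2(1)=\{1,2\}$, $A^1(2)=A^2(2)=\{1\}$, rewards $(r^1,r^2)$ and transition rates as follows: at state $1$, $(a^1,a^2)=(1,1)$ gives rewards $(4,9)$ and $\mu(2,1,1,1)=0$; $(1,2)$ gives $(6,3)$ and $\mu(2,1,1,2)=1$; $(2,1)$ gives $(5,4)$ and $\mu(2,1,2,1)=0$; $(2,2)$ gives $(4,5)$ and $\mu(2,1,2,2)=1$; at state $2$ the single action pair gives $(6,7)$ and $\mu(1,2,1,1)=1$. Then for every discount rate $\alpha>0$ the game has a unique stationary $\alpha$-discounted Nash equilibrium, namely $f^*_\alpha(1)=\left(\frac{4+\alpha}{12+7\alpha},\frac{8+6\alpha}{12+7\alpha}\right)$, $g^*_\alpha(1)=(\frac23,\frac13)$. Consequently this game (in which transition rates depend only on player 2's actions) has no stationary Blackwell-Nash equilibrium.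
   Context: A two-player continuous time stochastic game consists of a finite state set $S$, finite nonempty action sets $A^1(s),A^2(s)$, reward rates $r^i(s,a^1,a^2)$ ($i=1,2$), and transition rates $\mu(s',s,a^1,a^2)\ge0$ from $s$ to $s'\ne s$, with $\mu(s,s,a^1,a^2)=-\sum_{s'\ne s}\mu(s',s,a^1,a^2)$. Stationary strategies $f,g$ assign to each state a probability distribution on $A^1(s)$, resp. $A^2(s)$. For a stationary pair, $r^i(s,f,g)=\sum_{a^1,a^2}f(s,a^1)g(s,a^2)r^i(s,a^1,a^2)$ and $Q(f,g)$ is the generator matrix with $Q(f,g)_{ss'}=\sum_{a^1,a^2}f(s,a^1)g(s,a^2)\mu(s',s,a^1,a^2)$. For $\alpha>0$ the $\alpha$-discounted payoff is $v^i_\alpha(s,f,g)=E^s_{f,g}\int_0^\infty e^{-\alpha t}r^i(s_t,f,g)\,dt$, i.e. $v^i_\alpha(f,g)=(\alpha I-Q(f,g))^{-1}r^i(f,g)$. A stationary pair $(f^*,g^* )$ is an $\alpha$-discounted Nash equilibrium if for all $s$, $v^1_\alpha(s,f^*,g^* )\ge v^1_\alpha(s,f,g^* )$ for all stationary $f$ and $v^2_\alpha(s,f^*,g^* )\ge v^2_\alpha(s,f^*,g)$ for all stationary $g$. It is a Blackwell-Nash equilibrium (BNE) if there is $\alpha_0>0$ such that it is an $\alpha$-discounted Nash equilibrium for all $\alpha\in(0,\alpha_0]$. *)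

theory Defs
  imports "HOL-Analysis.Analysis"
begin

text \<open>Rewards r s a1 a2; transition rates
  mu s' s a1 a2 from s to s' (only used for s' different from s; the diagonal is
  defined by the generator convention).\<close>

definition stationary :: "('s \<Rightarrow> nat set) \<Rightarrow> ('s \<Rightarrow> nat \<Rightarrow> real) \<Rightarrow> bool" where
  "stationary A f \<longleftrightarrow> (\<forall>s. (\<forall>a\<in>A s. f s a \<ge> 0) \<and> (\<forall>a. a \<notin> A s \<longrightarrow> f s a = 0)
      \<and> (\<Sum>a\<in>A s. f s a) = 1)"

definition gen_rate :: "('s::finite \<Rightarrow> 's \<Rightarrow> nat \<Rightarrow> nat \<Rightarrow> real) \<Rightarrow> 's \<Rightarrow> 's \<Rightarrow> nat \<Rightarrow> nat \<Rightarrow> real" where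
  "gen_rate mu s' s a1 a2 =
     (if s' = s then - (\<Sum>t\<in>UNIV - {s}. mu t s a1 a2) else mu s' s a1 a2)"

definition reward_vec ::
  "('s::finite \<Rightarrow> nat set) \<Rightarrow> ('s \<Rightarrow> nat set) \<Rightarrow> ('s \<Rightarrow> nat \<Rightarrow> nat \<Rightarrow> real)
   \<Rightarrow> ('s \<Rightarrow> nat \<Rightarrow> real) \<Rightarrow> ('s \<Rightarrow> nat \<Rightarrow> real) \<Rightarrow> real ^ 's" where
  "reward_vec A1 A2 r f g = (\<chi> s. \<Sum>a1\<in>A1 s. \<Sum>a2\<in>A2 s. f s a1 * g s a2 * r s a1 a2)"

definition gen_matrix ::
  "('s::finite \<Rightarrow> nat set) \<Rightarrow> ('s \<Rightarrow> nat set) \<Rightarrow> ('s \<Rightarrow> 's \<Rightarrow> nat \<Rightarrow> nat \<Rightarrow> real)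
   \<Rightarrow> ('s \<Rightarrow> nat \<Rightarrow> real) \<Rightarrow> ('s \<Rightarrow> nat \<Rightarrow> real) \<Rightarrow> real ^ 's ^ 's" where
  "gen_matrix A1 A2 mu f g =
     (\<chi> s s'. \<Sum>a1\<in>A1 s. \<Sum>a2\<in>A2 s. f s a1 * g s a2 * gen_rate mu s' s a1 a2)"

definition disc_payoff ::
  "('s::finite \<Rightarrow> nat set) \<Rightarrow> ('s \<Rightarrow> nat set) \<Rightarrow> ('s \<Rightarrow> nat \<Rightarrow> nat \<Rightarrow> real)
   \<Rightarrow> ('s \<Rightarrow> 's \<Rightarrow> nat \<Rightarrow> nat \<Rightarrow> real) \<Rightarrow> real
   \<Rightarrow> ('s \<Rightarrow> nat \<Rightarrow> real) \<Rightarrow> ('s \<Rightarrow> nat \<Rightarrow> real) \<Rightarrow> real ^ 's" where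
  "disc_payoff A1 A2 r mu \<alpha> f g =
     matrix_inv (\<alpha> *\<^sub>R mat 1 - gen_matrix A1 A2 mu f g) *v reward_vec A1 A2 r f g"

definition disc_NE ::
  "('s::finite \<Rightarrow> nat set) \<Rightarrow> ('s \<Rightarrow> nat set) \<Rightarrow> ('s \<Rightarrow> nat \<Rightarrow> nat \<Rightarrow> real)
   \<Rightarrow> ('s \<Rightarrow> nat \<Rightarrow> nat \<Rightarrow> real) \<Rightarrow> ('s \<Rightarrow> 's \<Rightarrow> nat \<Rightarrow> nat \<Rightarrow> real) \<Rightarrow> real
   \<Rightarrow> ('s \<Rightarrow> nat \<Rightarrow> real) \<Rightarrow> ('s \<Rightarrow> nat \<Rightarrow> real) \<Rightarrow> bool" where
  "disc_NE A1 A2 r1 r2 mu \<alpha> f g \<longleftrightarrow>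
     stationary A1 f \<and> stationary A2 g \<and>
     (\<forall>f'. stationary A1 f' \<longrightarrow> (\<forall>s. disc_payoff A1 A2 r1 mu \<alpha> f g $ s \<ge> disc_payoff A1 A2 r1 mu \<alpha> f' g $ s)) \<and>
     (\<forall>g'. stationary A2 g' \<longrightarrow> (\<forall>s. disc_payoff A1 A2 r2 mu \<alpha> f g $ s \<ge> disc_payoff A1 A2 r2 mu \<alpha> f g' $ s))"

definition blackwell_NE ::
  "('s::finite \<Rightarrow> nat set) \<Rightarrow> ('s \<Rightarrow> nat set) \<Rightarrow> ('s \<Rightarrow> nat \<Rightarrow> nat \<Rightarrow> real)
   \<Rightarrow> ('s \<Rightarrow> nat \<Rightarrow> nat \<Rightarrow> real) \<Rightarrow> ('s \<Rightarrow> 's \<Rightarrow> nat \<Rightarrow> nat \<Rightarrow> real)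
   \<Rightarrow> ('s \<Rightarrow> nat \<Rightarrow> real) \<Rightarrow> ('s \<Rightarrow> nat \<Rightarrow> real) \<Rightarrow> bool" where
  "blackwell_NE A1 A2 r1 r2 mu f g \<longleftrightarrow>
     (\<exists>\<alpha>0>0. \<forall>\<alpha>. 0 < \<alpha> \<and> \<alpha> \<le> \<alpha>0 \<longrightarrow> disc_NE A1 A2 r1 r2 mu \<alpha> f g)"

datatype st = S1 | S2

lemma UNIV_st: "(UNIV :: st set) = {S1, S2}"
  using st.exhaust by auto

instance st :: finite
  by standard (simp add: UNIV_st)

definition exA1 :: "st \<Rightarrow> nat set" where
  "exA1 s = (case s of S1 \<Rightarrow> {1, 2} | S2 \<Rightarrow> {1})"

definition exA2 :: "st \<Rightarrow> nat set" where
  "exA2 s = (case s of S1 \<Rightarrow> {1, 2} | S2 \<Rightarrow> {1})"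

definition exr1 :: "st \<Rightarrow> nat \<Rightarrow> nat \<Rightarrow> real" where
  "exr1 s a1 a2 = (case s of
      S1 \<Rightarrow> (if a1 = 1 \<and> a2 = 1 then 4 else if a1 = 1 \<and> a2 = 2 then 6
             else if a1 = 2 \<and> a2 = 1 then 5 else if a1 = 2 \<and> a2 = 2 then 4 else 0)
    | S2 \<Rightarrow> (if a1 = 1 \<and> a2 = 1 then 6 else 0))"

definition exr2 :: "st \<Rightarrow> nat \<Rightarrow> nat \<Rightarrow> real" where
  "exr2 s a1 a2 = (case s of
      S1 \<Rightarrow> (if a1 = 1 \<and> a2 = 1 then 9 else if a1 = 1 \<and> a2 = 2 then 3
             else if a1 = 2 \<and> a2 = 1 then 4 else if a1 = 2 \<and> a2 = 2 then 5 else 0)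
    | S2 \<Rightarrow> (if a1 = 1 \<and> a2 = 1 then 7 else 0))"

definition exmu :: "st \<Rightarrow> st \<Rightarrow> nat \<Rightarrow> nat \<Rightarrow> real" where
  "exmu s' s a1 a2 = (if s' = S2 \<and> s = S1 then (if a2 = 2 then 1 else 0)
                     else if s' = S1 \<and> s = S2 then 1 else 0)"

definition fstar :: "real \<Rightarrow> st \<Rightarrow> nat \<Rightarrow> real" where
  "fstar \<alpha> s a = (case s of
      S1 \<Rightarrow> (if a = 1 then (4 + \<alpha>) / (12 + 7 * \<alpha>)
             else if a = 2 then (8 + 6 * \<alpha>) / (12 + 7 * \<alpha>) else 0)
    | S2 \<Rightarrow> (if a = 1 then 1 else 0))"

definition gstar :: "st \<Rightarrow> nat \<Rightarrow> real" where
  "gstar s a = (case s of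
      S1 \<Rightarrow> (if a = 1 then 2 / 3 else if a = 2 then 1 / 3 else 0)
    | S2 \<Rightarrow> (if a = 1 then 1 else 0))"

end

theory Submission
  imports Defs
begin

text \<open>For a generator \<open>Q\<close> and \<open>\<alpha> > 0\<close> the matrix \<open>\<alpha> I - Q\<close> is invertible (maximum principle), so the
  discounted payoff is the unique solution of \<open>\<alpha> v - Q v = r\<close>. In the example every stationary
  strategy is determined by the probability of action 1 in state 1, and solving this \<open>2 \<times> 2\<close>
  system shows that a unilateral deviation \<open>p \<mapsto> p'\<close> of player 1 changes each of his payoffs by
  a positive multiple of \<open>(p' - p) (2 - 3 q)\<close>, and a deviation \<open>q \<mapsto> q'\<close> of player 2 changes
  hers by a positive multiple of \<open>(q' - q) (p (12 + 7 \<alpha>) - (4 + \<alpha>))\<close>. The game therefore behaves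
  like matching pennies, whose unique equilibrium makes both players indifferent; since player 1's
  equilibrium probability \<open>(4 + \<alpha>) / (12 + 7 \<alpha>)\<close> is injective in \<open>\<alpha>\<close>, no stationary pair is an
  equilibrium for two different discount rates.\<close>

definition generator :: "real^'s^'s \<Rightarrow> bool" where
  "generator Q \<longleftrightarrow> (\<forall>s t. s \<noteq> t \<longrightarrow> Q $ s $ t \<ge> 0) \<and> (\<forall>s. (\<Sum>t\<in>UNIV. Q $ s $ t) = 0)"

lemma resolvent_mult_vec_nth:
  fixes Q :: "real^'s::finite^'s"
  shows "((\<alpha> *\<^sub>R mat 1 - Q) *v x) $ s = \<alpha> * x $ s - (\<Sum>t\<in>UNIV. Q $ s $ t * x $ t)"
proof -
  have "(\<alpha> *\<^sub>R mat 1 - Q) *v x = \<alpha> *\<^sub>R x - Q *v x"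
    by (simp add: matrix_vector_mult_diff_rdistrib flip: scaleR_matrix_vector_assoc)
  then show ?thesis by (simp add: matrix_vector_mult_def)
qed

text \<open>A maximum principle: at a maximal coordinate of a solution of \<open>\<alpha> x = Q x\<close> the
  right-hand side is a nonnegative combination of differences \<open>x t - x m \<le> 0\<close>.\<close>
lemma generator_resolvent_kernel_nonpos:
  fixes Q :: "real^'s::finite^'s"
  assumes Q: "generator Q" and "\<alpha> > 0" and x: "(\<alpha> *\<^sub>R mat 1 - Q) *v x = 0"
  shows "x $ s \<le> 0"
proof -
  obtain m where m: "\<And>t. x $ t \<le> x $ m"
    using Max_in[of "range (($) x)"] Max_ge[of "range (($) x)"] by fastforce
  have "\<alpha> * x $ m = (\<Sum>t\<in>UNIV. Q $ m $ t * x $ t)"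
    using x resolvent_mult_vec_nth[of \<alpha> Q x m] by simp
  also have "\<dots> = (\<Sum>t\<in>UNIV. Q $ m $ t * (x $ t - x $ m))"
    using Q by (simp add: generator_def right_diff_distrib sum_subtractf flip: sum_distrib_right)
  also have "\<dots> \<le> 0"
  proof (rule sum_nonpos)
    fix t
    show "Q $ m $ t * (x $ t - x $ m) \<le> 0"
      using Q m[of t] by (cases "t = m") (auto simp: generator_def mult_nonneg_nonpos)
  qed
  finally have "x $ m \<le> 0" using \<open>\<alpha> > 0\<close> by (simp add: mult_le_0_iff)
  then show ?thesis using m[of s] by linarith
qed

lemma generator_resolvent_invertible:
  fixes Q :: "real^'s::finite^'s"
  assumes "generator Q" and "\<alpha> > 0"
  shows "invertible (\<alpha> *\<^sub>R mat 1 - Q)"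
  unfolding invertible_left_inverse matrix_left_invertible_ker
proof (intro allI impI)
  fix x assume x: "(\<alpha> *\<^sub>R mat 1 - Q) *v x = 0"
  then have minus_x: "(\<alpha> *\<^sub>R mat 1 - Q) *v (- x) = 0"
    by (simp add: vec_eq_iff matrix_vector_mult_def sum_negf)
  show "x = 0"
    using generator_resolvent_kernel_nonpos[OF assms x]
      generator_resolvent_kernel_nonpos[OF assms minus_x]
    by (simp add: vec_eq_iff order_antisym)
qed

lemma matrix_inv_mult_vec_eqI:
  fixes M :: "'a::field^'n^'n"
  assumes "invertible M" and "M *v x = b"
  shows "matrix_inv M *v b = x"
proof -
  have "matrix_inv M ** M = mat 1"
    using assms(1) unfolding invertible_def matrix_inv_def by (rule someI2_ex) blast
  then show ?thesis
    using assms(2) by (metis matrix_vector_mul_assoc matrix_vector_mul_lid)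
qed

lemma gen_matrix_generator:
  assumes "stationary A1 f" and "stationary A2 g"
    and "\<And>s s' a1 a2. s' \<noteq> s \<Longrightarrow> mu s' s a1 a2 \<ge> 0"
  shows "generator (gen_matrix A1 A2 mu f g)"
proof -
  have rate_row_sum: "(\<Sum>s'\<in>UNIV. gen_rate mu s' s a1 a2) = 0" for s a1 a2
    by (simp add: gen_rate_def sum.remove[of UNIV s])
  have "(\<Sum>s'\<in>UNIV. gen_matrix A1 A2 mu f g $ s $ s') =
      (\<Sum>a1\<in>A1 s. \<Sum>a2\<in>A2 s. f s a1 * g s a2 * (\<Sum>s'\<in>UNIV. gen_rate mu s' s a1 a2))" for s
    unfolding gen_matrix_def by (simp add: sum_distrib_left sum.swap[of _ UNIV])
  moreover have "gen_matrix A1 A2 mu f g $ s $ s' \<ge> 0" if "s \<noteq> s'" for s s'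
    using assms that unfolding gen_matrix_def stationary_def gen_rate_def
    by (auto intro!: sum_nonneg)
  ultimately show ?thesis
    unfolding generator_def by (simp add: rate_row_sum)
qed

lemma disc_payoff_eqI:
  assumes "stationary A1 f" and "stationary A2 g"
    and "\<And>s s' a1 a2. s' \<noteq> s \<Longrightarrow> mu s' s a1 a2 \<ge> 0" and "\<alpha> > 0"
    and "(\<alpha> *\<^sub>R mat 1 - gen_matrix A1 A2 mu f g) *v v = reward_vec A1 A2 r f g"
  shows "disc_payoff A1 A2 r mu \<alpha> f g = v"
  unfolding disc_payoff_def
  using generator_resolvent_invertible[OF gen_matrix_generator[OF assms(1-3)] assms(4)] assms(5)
  by (rule matrix_inv_mult_vec_eqI)

lemma divide_le_divide_iff_sign:
  fixes A B c d1 d2 x :: real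
  assumes "d1 > 0" "d2 > 0" "c > 0" and "A * d2 - B * d1 = c * x"
  shows "A / d1 \<le> B / d2 \<longleftrightarrow> x \<le> 0"
proof -
  have "A / d1 \<le> B / d2 \<longleftrightarrow> A * d2 - B * d1 \<le> 0"
    using assms(1,2) by (simp add: divide_le_eq le_divide_eq field_simps)
  also have "\<dots> \<longleftrightarrow> x \<le> 0"
    using assms(3,4) by (simp add: mult_le_0_iff)
  finally show ?thesis .
qed

lemma unit_interval_maximizer_iff:
  fixes p c :: real
  assumes "0 \<le> p" "p \<le> 1"
  shows "(\<forall>p'. 0 \<le> p' \<and> p' \<le> 1 \<longrightarrow> (p' - p) * c \<le> 0) \<longleftrightarrow> (c > 0 \<longrightarrow> p = 1) \<and> (c < 0 \<longrightarrow> p = 0)"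
proof
  assume max: "\<forall>p'. 0 \<le> p' \<and> p' \<le> 1 \<longrightarrow> (p' - p) * c \<le> 0"
  have "(1 - p) * c \<le> 0" "(0 - p) * c \<le> 0" using max by auto
  then show "(c > 0 \<longrightarrow> p = 1) \<and> (c < 0 \<longrightarrow> p = 0)"
    using assms by (auto simp: mult_le_0_iff zero_le_mult_iff)
next
  assume "(c > 0 \<longrightarrow> p = 1) \<and> (c < 0 \<longrightarrow> p = 0)"
  then show "\<forall>p'. 0 \<le> p' \<and> p' \<le> 1 \<longrightarrow> (p' - p) * c \<le> 0"
    by (cases c "0::real" rule: linorder_cases) (auto simp: mult_le_0_iff)
qed

lemma all_st_iff: "(\<forall>s. P s) \<longleftrightarrow> P S1 \<and> P S2"
  by (metis st.exhaust)

definition exstrat :: "real \<Rightarrow> st \<Rightarrow> nat \<Rightarrow> real" where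
  "exstrat p s a = (case s of
      S1 \<Rightarrow> (if a = 1 then p else if a = 2 then 1 - p else 0)
    | S2 \<Rightarrow> (if a = 1 then 1 else 0))"

lemma exstrat_inj: "exstrat p = exstrat p' \<Longrightarrow> p = p'"
  by (drule fun_cong[of _ _ S1], drule fun_cong[of _ _ 1]) (simp add: exstrat_def)

lemma stationary_exA1_iff: "stationary exA1 f \<longleftrightarrow> (\<exists>p. 0 \<le> p \<and> p \<le> 1 \<and> f = exstrat p)"
proof
  assume "stationary exA1 f"
  then have f: "f S1 1 \<ge> 0" "f S1 2 \<ge> 0" "f S1 1 + f S1 2 = 1" "f S2 1 = 1"
      "\<And>a. a \<noteq> 1 \<Longrightarrow> a \<noteq> 2 \<Longrightarrow> f S1 a = 0" "\<And>a. a \<noteq> 1 \<Longrightarrow> f S2 a = 0"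
    unfolding stationary_def exA1_def by (auto simp: all_st_iff)
  then have "f = exstrat (f S1 1)"
    by (auto simp: exstrat_def fun_eq_iff split: st.split)
  with f show "\<exists>p. 0 \<le> p \<and> p \<le> 1 \<and> f = exstrat p"
    by (intro exI[of _ "f S1 1"]) auto
next
  assume "\<exists>p. 0 \<le> p \<and> p \<le> 1 \<and> f = exstrat p"
  then show "stationary exA1 f"
    unfolding stationary_def exA1_def exstrat_def by (auto simp: all_st_iff)
qed

lemma stationary_exA2_iff: "stationary exA2 g \<longleftrightarrow> (\<exists>q. 0 \<le> q \<and> q \<le> 1 \<and> g = exstrat q)"
proof -
  have "exA2 = exA1"
    by (simp add: fun_eq_iff exA1_def exA2_def)
  then show ?thesis
    by (simp add: stationary_exA1_iff)
qed

definition exreward_S1 :: "(st \<Rightarrow> nat \<Rightarrow> nat \<Rightarrow> real) \<Rightarrow> real \<Rightarrow> real \<Rightarrow> real" where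
  "exreward_S1 r p q =
     p * q * r S1 1 1 + p * (1 - q) * r S1 1 2 + (1 - p) * q * r S1 2 1 + (1 - p) * (1 - q) * r S1 2 2"

text \<open>The chain leaves \<open>S1\<close> at rate \<open>1 - q\<close> and leaves \<open>S2\<close> at rate 1, so
  \<open>det (\<alpha> I - Q) = \<alpha> (\<alpha> + 2 - q)\<close>.\<close>
lemma disc_payoff_exstrat:
  assumes "\<alpha> > 0" "0 \<le> p" "p \<le> 1" "0 \<le> q" "q \<le> 1"
  shows "disc_payoff exA1 exA2 r exmu \<alpha> (exstrat p) (exstrat q) =
    (\<chi> s. (if s = S1 then (\<alpha> + 1) * exreward_S1 r p q + (1 - q) * r S2 1 1
           else exreward_S1 r p q + (\<alpha> + 1 - q) * r S2 1 1) / (\<alpha> * (\<alpha> + 2 - q)))"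
proof (rule disc_payoff_eqI[OF _ _ _ assms(1)])
  show "stationary exA1 (exstrat p)" "stationary exA2 (exstrat q)"
    using assms by (auto simp: stationary_exA1_iff stationary_exA2_iff)
  show "0 \<le> exmu s' s a1 a2" for s' s a1 a2
    by (simp add: exmu_def)
  have M: "\<alpha> *\<^sub>R mat 1 - gen_matrix exA1 exA2 exmu (exstrat p) (exstrat q) =
      (\<chi> s t. if s = S1 then (if t = S1 then \<alpha> + 1 - q else q - 1)
              else (if t = S1 then -1 else \<alpha> + 1))"
    by (simp add: gen_matrix_def gen_rate_def exA1_def exA2_def exmu_def exstrat_def vec_eq_iff
        mat_def UNIV_st all_st_iff algebra_simps)
  have R: "reward_vec exA1 exA2 r (exstrat p) (exstrat q) =
      (\<chi> s. if s = S1 then exreward_S1 r p q else r S2 1 1)"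
    by (simp add: reward_vec_def exreward_S1_def exA1_def exA2_def exstrat_def vec_eq_iff all_st_iff)
  have "\<alpha> \<noteq> 0" "\<alpha> + 2 \<noteq> q"
    using assms by simp_all
  then show "(\<alpha> *\<^sub>R mat 1 - gen_matrix exA1 exA2 exmu (exstrat p) (exstrat q)) *v
      (\<chi> s. (if s = S1 then (\<alpha> + 1) * exreward_S1 r p q + (1 - q) * r S2 1 1
           else exreward_S1 r p q + (\<alpha> + 1 - q) * r S2 1 1) / (\<alpha> * (\<alpha> + 2 - q))) =
      reward_vec exA1 exA2 r (exstrat p) (exstrat q)"
    unfolding M R
    by (simp add: matrix_vector_mult_def vec_eq_iff UNIV_st all_st_iff)
      (simp add: divide_simps, simp add: algebra_simps)
qed

lemma exreward_S1_exr1: "exreward_S1 exr1 p q = 4 + 2 * p + q - 3 * p * q"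
  by (simp add: exreward_S1_def exr1_def algebra_simps)

lemma exreward_S1_exr2: "exreward_S1 exr2 p q = 5 - 2 * p - q + 7 * p * q"
  by (simp add: exreward_S1_def exr2_def algebra_simps)

lemma disc_payoff_exr1_le_iff:
  assumes "\<alpha> > 0" "0 \<le> p" "p \<le> 1" "0 \<le> p'" "p' \<le> 1" "0 \<le> q" "q \<le> 1"
  shows "disc_payoff exA1 exA2 exr1 exmu \<alpha> (exstrat p') (exstrat q) $ s
           \<le> disc_payoff exA1 exA2 exr1 exmu \<alpha> (exstrat p) (exstrat q) $ s
         \<longleftrightarrow> (p' - p) * (2 - 3 * q) \<le> 0"
proof -
  define d where "d = \<alpha> * (\<alpha> + 2 - q)"
  have d: "d > 0" using assms by (simp add: d_def)
  note payoff = disc_payoff_exstrat[OF assms(1,2,3,6,7)] disc_payoff_exstrat[OF assms(1,4,5,6,7)]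
  show ?thesis
  proof (cases s)
    case S1
    have "((\<alpha> + 1) * exreward_S1 exr1 p' q + (1 - q) * exr1 S2 1 1) * d
        - ((\<alpha> + 1) * exreward_S1 exr1 p q + (1 - q) * exr1 S2 1 1) * d
        = ((\<alpha> + 1) * d) * ((p' - p) * (2 - 3 * q))"
      by (simp add: exreward_S1_exr1 algebra_simps)
    from divide_le_divide_iff_sign[OF d d _ this] show ?thesis
      using S1 d assms by (simp add: payoff flip: d_def)
  next
    case S2
    have "(exreward_S1 exr1 p' q + (\<alpha> + 1 - q) * exr1 S2 1 1) * d
        - (exreward_S1 exr1 p q + (\<alpha> + 1 - q) * exr1 S2 1 1) * d
        = d * ((p' - p) * (2 - 3 * q))"
      by (simp add: exreward_S1_exr1 algebra_simps)
    from divide_le_divide_iff_sign[OF d d d this] show ?thesis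
      using S2 by (simp add: payoff flip: d_def)
  qed
qed

lemma disc_payoff_exr2_le_iff:
  assumes "\<alpha> > 0" "0 \<le> p" "p \<le> 1" "0 \<le> q" "q \<le> 1" "0 \<le> q'" "q' \<le> 1"
  shows "disc_payoff exA1 exA2 exr2 exmu \<alpha> (exstrat p) (exstrat q') $ s
           \<le> disc_payoff exA1 exA2 exr2 exmu \<alpha> (exstrat p) (exstrat q) $ s
         \<longleftrightarrow> (q' - q) * (p * (12 + 7 * \<alpha>) - (4 + \<alpha>)) \<le> 0"
proof -
  define d where "d = \<alpha> * (\<alpha> + 2 - q)"
  define d' where "d' = \<alpha> * (\<alpha> + 2 - q')"
  have d: "d > 0" "d' > 0" using assms by (simp_all add: d_def d'_def)
  note payoff = disc_payoff_exstrat[OF assms(1-5)] disc_payoff_exstrat[OF assms(1,2,3,6,7)]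
  show ?thesis
  proof (cases s)
    case S1
    have "((\<alpha> + 1) * exreward_S1 exr2 p q' + (1 - q') * exr2 S2 1 1) * d
        - ((\<alpha> + 1) * exreward_S1 exr2 p q + (1 - q) * exr2 S2 1 1) * d'
        = (\<alpha> * (\<alpha> + 1)) * ((q' - q) * (p * (12 + 7 * \<alpha>) - (4 + \<alpha>)))"
      by (simp add: exreward_S1_exr2 exr2_def d_def d'_def algebra_simps)
    from divide_le_divide_iff_sign[OF d(2,1) _ this] show ?thesis
      using S1 assms by (simp add: payoff flip: d_def d'_def)
  next
    case S2
    have "(exreward_S1 exr2 p q' + (\<alpha> + 1 - q') * exr2 S2 1 1) * d
        - (exreward_S1 exr2 p q + (\<alpha> + 1 - q) * exr2 S2 1 1) * d'
        = \<alpha> * ((q' - q) * (p * (12 + 7 * \<alpha>) - (4 + \<alpha>)))"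
      by (simp add: exreward_S1_exr2 exr2_def d_def d'_def algebra_simps)
    from divide_le_divide_iff_sign[OF d(2,1) _ this] show ?thesis
      using S2 assms by (simp add: payoff flip: d_def d'_def)
  qed
qed

lemma disc_NE_exstrat_iff:
  assumes "\<alpha> > 0" "0 \<le> p" "p \<le> 1" "0 \<le> q" "q \<le> 1"
  shows "disc_NE exA1 exA2 exr1 exr2 exmu \<alpha> (exstrat p) (exstrat q) \<longleftrightarrow>
    (\<forall>p'. 0 \<le> p' \<and> p' \<le> 1 \<longrightarrow> (p' - p) * (2 - 3 * q) \<le> 0) \<and>
    (\<forall>q'. 0 \<le> q' \<and> q' \<le> 1 \<longrightarrow> (q' - q) * (p * (12 + 7 * \<alpha>) - (4 + \<alpha>)) \<le> 0)"
proof -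
  have "stationary exA1 (exstrat p)" "stationary exA2 (exstrat q)"
    using assms by (auto simp: stationary_exA1_iff stationary_exA2_iff)
  moreover have "(\<forall>f'. stationary exA1 f' \<longrightarrow> (\<forall>s.
        disc_payoff exA1 exA2 exr1 exmu \<alpha> f' (exstrat q) $ s
          \<le> disc_payoff exA1 exA2 exr1 exmu \<alpha> (exstrat p) (exstrat q) $ s))
      \<longleftrightarrow> (\<forall>p'. 0 \<le> p' \<and> p' \<le> 1 \<longrightarrow> (p' - p) * (2 - 3 * q) \<le> 0)"
    using assms by (auto simp: stationary_exA1_iff disc_payoff_exr1_le_iff)
  moreover have "(\<forall>g'. stationary exA2 g' \<longrightarrow> (\<forall>s.
        disc_payoff exA1 exA2 exr2 exmu \<alpha> (exstrat p) g' $ s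
          \<le> disc_payoff exA1 exA2 exr2 exmu \<alpha> (exstrat p) (exstrat q) $ s))
      \<longleftrightarrow> (\<forall>q'. 0 \<le> q' \<and> q' \<le> 1 \<longrightarrow> (q' - q) * (p * (12 + 7 * \<alpha>) - (4 + \<alpha>)) \<le> 0)"
    using assms by (auto simp: stationary_exA1_iff stationary_exA2_iff disc_payoff_exr2_le_iff)
  ultimately show ?thesis
    unfolding disc_NE_def by simp
qed

text \<open>At a pure strategy of player 1 the unique best reply of player 2 is pure and breaks it, so both
  players must be indifferent.\<close>
lemma ex_best_replies_iff:
  fixes \<alpha> p q :: real
  assumes "\<alpha> > 0" "0 \<le> p" "p \<le> 1" "0 \<le> q" "q \<le> 1"
  shows "((2 - 3 * q > 0 \<longrightarrow> p = 1) \<and> (2 - 3 * q < 0 \<longrightarrow> p = 0)) \<and>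
         ((p * (12 + 7 * \<alpha>) - (4 + \<alpha>) > 0 \<longrightarrow> q = 1) \<and> (p * (12 + 7 * \<alpha>) - (4 + \<alpha>) < 0 \<longrightarrow> q = 0))
     \<longleftrightarrow> p = (4 + \<alpha>) / (12 + 7 * \<alpha>) \<and> q = 2 / 3"
proof -
  define D where "D = p * (12 + 7 * \<alpha>) - (4 + \<alpha>)"
  have D_eq_0: "D = 0 \<longleftrightarrow> p = (4 + \<alpha>) / (12 + 7 * \<alpha>)"
    using assms by (simp add: D_def field_simps)
  have "p = 1 \<Longrightarrow> D > 0" "p = 0 \<Longrightarrow> D < 0"
    using assms by (simp_all add: D_def)
  then have "((2 - 3 * q > 0 \<longrightarrow> p = 1) \<and> (2 - 3 * q < 0 \<longrightarrow> p = 0)) \<and>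
      ((D > 0 \<longrightarrow> q = 1) \<and> (D < 0 \<longrightarrow> q = 0)) \<longleftrightarrow> D = 0 \<and> q = 2 / 3"
    by (cases D "0::real" rule: linorder_cases) auto
  then show ?thesis
    unfolding D_eq_0 by (simp only: D_def)
qed

lemma fstar_eq_exstrat: "\<alpha> > 0 \<Longrightarrow> fstar \<alpha> = exstrat ((4 + \<alpha>) / (12 + 7 * \<alpha>))"
  by (auto simp: fstar_def exstrat_def fun_eq_iff field_simps split: st.split)

lemma gstar_eq_exstrat: "gstar = exstrat (2 / 3)"
  by (auto simp: gstar_def exstrat_def fun_eq_iff split: st.split)

lemma disc_NE_exstrat_iff_eq:
  assumes "\<alpha> > 0" "0 \<le> p" "p \<le> 1" "0 \<le> q" "q \<le> 1"
  shows "disc_NE exA1 exA2 exr1 exr2 exmu \<alpha> (exstrat p) (exstrat q) \<longleftrightarrow>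
    p = (4 + \<alpha>) / (12 + 7 * \<alpha>) \<and> q = 2 / 3"
  unfolding disc_NE_exstrat_iff[OF assms] unit_interval_maximizer_iff[OF assms(2,3)]
    unit_interval_maximizer_iff[OF assms(4,5)]
  by (rule ex_best_replies_iff[OF assms])

lemma disc_NE_ex_iff:
  assumes "\<alpha> > 0"
  shows "disc_NE exA1 exA2 exr1 exr2 exmu \<alpha> f g \<longleftrightarrow> f = fstar \<alpha> \<and> g = gstar"
proof -
  have "disc_NE exA1 exA2 exr1 exr2 exmu \<alpha> f g \<longleftrightarrow>
      (\<exists>p q. 0 \<le> p \<and> p \<le> 1 \<and> 0 \<le> q \<and> q \<le> 1 \<and> f = exstrat p \<and> g = exstrat q \<and>
         disc_NE exA1 exA2 exr1 exr2 exmu \<alpha> (exstrat p) (exstrat q))"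
    unfolding disc_NE_def stationary_exA1_iff stationary_exA2_iff by blast
  also have "\<dots> \<longleftrightarrow> f = exstrat ((4 + \<alpha>) / (12 + 7 * \<alpha>)) \<and> g = exstrat (2 / 3)"
  proof -
    have "0 \<le> (4 + \<alpha>) / (12 + 7 * \<alpha>)" "(4 + \<alpha>) / (12 + 7 * \<alpha>) \<le> 1"
        "0 \<le> (2 / 3 :: real)" "(2 / 3 :: real) \<le> 1"
      using assms by simp_all
    then show ?thesis
      using disc_NE_exstrat_iff_eq[OF assms] by blast
  qed
  finally show ?thesis
    using assms by (simp add: fstar_eq_exstrat gstar_eq_exstrat)
qed

lemma fstar_inj:
  assumes "\<alpha> > 0" "\<beta> > 0" "fstar \<alpha> = fstar \<beta>"
  shows "\<alpha> = \<beta>"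
proof -
  have "(4 + \<alpha>) / (12 + 7 * \<alpha>) = (4 + \<beta>) / (12 + 7 * \<beta>)"
    using assms by (auto simp: fstar_eq_exstrat dest: exstrat_inj)
  then have "16 * \<alpha> = 16 * \<beta>"
    using assms by (simp add: field_simps)
  then show ?thesis by simp
qed

theorem mainTheorem5:
  shows "(\<forall>\<alpha>>0. \<forall>f g. disc_NE exA1 exA2 exr1 exr2 exmu \<alpha> f g \<longleftrightarrow> f = fstar \<alpha> \<and> g = gstar)
    \<and> \<not> (\<exists>f g. blackwell_NE exA1 exA2 exr1 exr2 exmu f g)"
proof (intro conjI allI impI notI)
  fix \<alpha> :: real and f g
  assume "\<alpha> > 0"
  then show "disc_NE exA1 exA2 exr1 exr2 exmu \<alpha> f g \<longleftrightarrow> f = fstar \<alpha> \<and> g = gstar"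
    by (rule disc_NE_ex_iff)
next
  assume "\<exists>f g. blackwell_NE exA1 exA2 exr1 exr2 exmu f g"
  then obtain f g \<alpha>0 where "\<alpha>0 > 0"
    and NE: "\<And>\<alpha>. 0 < \<alpha> \<Longrightarrow> \<alpha> \<le> \<alpha>0 \<Longrightarrow> disc_NE exA1 exA2 exr1 exr2 exmu \<alpha> f g"
    unfolding blackwell_NE_def by blast
  have "f = fstar \<alpha>0" "f = fstar (\<alpha>0 / 2)"
    using NE[of \<alpha>0] NE[of "\<alpha>0 / 2"] disc_NE_ex_iff \<open>\<alpha>0 > 0\<close> by simp_all
  then have "\<alpha>0 = \<alpha>0 / 2"
    using fstar_inj[of \<alpha>0 "\<alpha>0 / 2"] \<open>\<alpha>0 > 0\<close> by simp
  then show False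
    using \<open>\<alpha>0 > 0\<close> by simp
qed

end
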